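(* Let $a_1\in\mathbb C$, $a_2\in\mathbb R$, $\theta\in[0,2\pi)$ with $2|a_1|+|a_2|<\frac{1}{4(1+\varepsilon)^3}$, and $f(\zeta)=\big(e^{i\theta}\zeta,\ e^{2i\theta}\zeta(a_1+a_2\zeta+\overline{a_1}\zeta^2)\big)$. Then $f$ (restricted to $\overline\Delta$) is a stationary disc for the hypersurface $\partial\Omega\cap\{\rho=0\}$, i.e. $f(\partial\Delta)\subset\{\rho=0\}$ and there is a continuous function $c:\partial\Delta\to\mathbb R\setminus\{0\}$ such that $\zeta\mapsto\zeta c(\zeta)\partial\rho(f(\zeta))$ extends holomorphically to $\Delta$ (continuously up to $\partial\Delta$).
   Context: $\Delta$ denotes the unit disc in $\mathbb C$ and $\Delta_r$ the disc of radius $r$ centered at $0$. Fix $0<\varepsilon<\frac{1}{100}$. Let $\rho(z,w)=|z|^2+|w|^2-\operatorname{Re}(\bar z^4w^2)-1$ on $\mathbb C^2$, $\partial\rho=(\partial\rho/\partial z,\partial\rho/\partial w)$, and $\Omega=\{\rho<0\}\cap\big(\Delta_{1+\varepsilon}\times\Delta_{\frac{1}{4(1+\varepsilon)^3}}\big)$. *)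

theory Defs
  imports "HOL-Analysis.Analysis"
begin

definition rho :: "complex \<Rightarrow> complex \<Rightarrow> real" where
  "rho z w = (cmod z)^2 + (cmod w)^2 - Re ((cnj z)^4 * w^2) - 1"

definition wirt_z :: "(complex \<Rightarrow> complex \<Rightarrow> real) \<Rightarrow> complex \<Rightarrow> complex \<Rightarrow> complex" where
  "wirt_z F z w =
     (complex_of_real (deriv (\<lambda>t::real. F (z + complex_of_real t) w) 0)
      - \<i> * complex_of_real (deriv (\<lambda>t::real. F (z + \<i> * complex_of_real t) w) 0)) / 2"

definition wirt_w :: "(complex \<Rightarrow> complex \<Rightarrow> real) \<Rightarrow> complex \<Rightarrow> complex \<Rightarrow> complex" where
  "wirt_w F z w =
     (complex_of_real (deriv (\<lambda>t::real. F z (w + complex_of_real t)) 0)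
      - \<i> * complex_of_real (deriv (\<lambda>t::real. F z (w + \<i> * complex_of_real t)) 0)) / 2"

definition Omega :: "real \<Rightarrow> (complex \<times> complex) set" where
  "Omega eps = {(z, w). rho z w < 0 \<and> cmod z < 1 + eps \<and> cmod w < 1 / (4 * (1 + eps)^3)}"

end

theory Submission
  imports Defs
begin

text \<open>On the unit circle the quadratic a1 + a2 z + conj(a1) z^2 equals z times the real number
  q = 2 Re(a1 conj z) + a2, so the boundary of the disc is the curve (u, q u^2) with u = e^(i theta) z
  unimodular. Along such a curve rho vanishes, d rho/dw = 0 and d rho/dz = conj(u) (1 - 2 q^2), so
  with c = 1/(1 - 2 q^2) the function z c (d rho)(f z) is the constant (e^(-i theta), 0). The
  boundary points lie on the frontier of Omega because, |q| being small, rho becomes negative when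
  the first coordinate is shrunk radially.\<close>

lemma wirt_z_eqI:
  assumes "((\<lambda>t. F (z + of_real t) w) has_real_derivative 2 * Re X) (at 0)"
    and "((\<lambda>t. F (z + \<i> * of_real t) w) has_real_derivative 2 * Re (\<i> * X)) (at 0)"
  shows "wirt_z F z w = X"
  using DERIV_imp_deriv[OF assms(1)] DERIV_imp_deriv[OF assms(2)]
  unfolding wirt_z_def by (simp add: complex_eq_iff)

lemma wirt_w_eqI:
  assumes "((\<lambda>t. F z (w + of_real t)) has_real_derivative 2 * Re X) (at 0)"
    and "((\<lambda>t. F z (w + \<i> * of_real t)) has_real_derivative 2 * Re (\<i> * X)) (at 0)"
  shows "wirt_w F z w = X"
  using DERIV_imp_deriv[OF assms(1)] DERIV_imp_deriv[OF assms(2)]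
  unfolding wirt_w_def by (simp add: complex_eq_iff)

text \<open>Symmetrised so that the complexified expression below has derivative Y + conj Y.\<close>

lemma rho_eq_Re:
  "rho z w = Re (z * cnj z + w * cnj w - (cnj z ^ 4 * w^2 + z ^ 4 * cnj w^2) / 2) - 1"
proof -
  define a where "a = cnj z ^ 4 * w^2"
  have "cnj z ^ 4 * w^2 + z ^ 4 * cnj w^2 = a + cnj a"
    by (simp add: a_def)
  then have "(cnj z ^ 4 * w^2 + z ^ 4 * cnj w^2) / 2 = of_real (Re a)"
    by (simp add: complex_add_cnj)
  then show ?thesis
    unfolding rho_def a_def[symmetric] by (simp add: complex_mult_cnj cmod_power2)
qed

lemma rho_has_real_derivative_z:
  "((\<lambda>t. rho (z + v * of_real t) w) has_real_derivative 2 * Re (v * (cnj z - 2 * z^3 * cnj w^2))) (at 0)"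
proof -
  define Y where "Y = v * (cnj z - 2 * z^3 * cnj w^2)"
  define H where "H s = (z + v * s) * (cnj z + cnj v * s) + w * cnj w
    - ((cnj z + cnj v * s) ^ 4 * w^2 + (z + v * s) ^ 4 * cnj w^2) / 2" for s
  have "(H has_field_derivative Y + cnj Y) (at 0)"
    unfolding H_def Y_def by (auto intro!: derivative_eq_intros simp: field_simps)
  then have "((\<lambda>t. Re (H (of_real t)) - 1) has_real_derivative Re (Y + cnj Y)) (at 0)"
    by (auto intro!: derivative_eq_intros has_vector_derivative_real_field)
  moreover have "(\<lambda>t. rho (z + v * of_real t) w) = (\<lambda>t. Re (H (of_real t)) - 1)"
    unfolding rho_eq_Re H_def by simp
  ultimately show ?thesis
    unfolding Y_def[symmetric] by simp
qed

lemma rho_has_real_derivative_w: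
  "((\<lambda>t. rho z (w + v * of_real t)) has_real_derivative 2 * Re (v * (cnj w - cnj z ^ 4 * w))) (at 0)"
proof -
  define Y where "Y = v * (cnj w - cnj z ^ 4 * w)"
  define H where "H s = z * cnj z + (w + v * s) * (cnj w + cnj v * s)
    - (cnj z ^ 4 * (w + v * s)^2 + z ^ 4 * (cnj w + cnj v * s)^2) / 2" for s
  have "(H has_field_derivative Y + cnj Y) (at 0)"
    unfolding H_def Y_def by (auto intro!: derivative_eq_intros simp: field_simps)
  then have "((\<lambda>t. Re (H (of_real t)) - 1) has_real_derivative Re (Y + cnj Y)) (at 0)"
    by (auto intro!: derivative_eq_intros has_vector_derivative_real_field)
  moreover have "(\<lambda>t. rho z (w + v * of_real t)) = (\<lambda>t. Re (H (of_real t)) - 1)"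
    unfolding rho_eq_Re H_def by simp
  ultimately show ?thesis
    unfolding Y_def[symmetric] by simp
qed

lemma wirt_z_rho: "wirt_z rho z w = cnj z - 2 * z^3 * cnj w^2"
  by (rule wirt_z_eqI) (use rho_has_real_derivative_z[of z 1 w] rho_has_real_derivative_z[of z \<i> w] in simp_all)

lemma wirt_w_rho: "wirt_w rho z w = cnj w - cnj z ^ 4 * w"
  by (rule wirt_w_eqI) (use rho_has_real_derivative_w[of z w 1] rho_has_real_derivative_w[of z w \<i>] in simp_all)

lemma cnj_mult_self_eq_1: "cmod u = 1 \<Longrightarrow> cnj u * u = 1"
  by (simp add: mult.commute complex_mult_cnj cmod_power2[symmetric])

lemma rho_square_curve_eq_0:
  assumes "cmod u = 1"
  shows "rho u (of_real q * u^2) = 0"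
proof -
  have "u * cnj u + of_real q * u^2 * cnj (of_real q * u^2)
      - (cnj u ^ 4 * (of_real q * u^2)^2 + u ^ 4 * cnj (of_real q * u^2)^2) / 2 = 1"
    unfolding complex_cnj_mult complex_cnj_power complex_cnj_complex_of_real
    using cnj_mult_self_eq_1[OF assms] by algebra
  then show ?thesis unfolding rho_eq_Re by simp
qed

lemma wirt_z_rho_square_curve:
  assumes "cmod u = 1"
  shows "wirt_z rho u (of_real q * u^2) = cnj u * of_real (1 - 2 * q^2)"
  unfolding wirt_z_rho complex_cnj_mult complex_cnj_power complex_cnj_complex_of_real
    of_real_diff of_real_mult of_real_power of_real_1 of_real_numeral
  using cnj_mult_self_eq_1[OF assms] by algebra

lemma wirt_w_rho_square_curve:
  assumes "cmod u = 1"
  shows "wirt_w rho u (of_real q * u^2) = 0"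
  unfolding wirt_w_rho complex_cnj_mult complex_cnj_power complex_cnj_complex_of_real
  using cnj_mult_self_eq_1[OF assms] by algebra

lemma rho_radial_scaling:
  assumes "cmod z = 1" "rho z w = 0"
  shows "rho (of_real t * z) w = (t^2 - 1) * (1 - (1 + t^2) * cmod w ^ 2)"
proof -
  have R: "Re (cnj z ^ 4 * w^2) = cmod w ^ 2"
    using assms unfolding rho_def by simp
  have "rho (of_real t * z) w = t^2 * cmod z ^ 2 + cmod w ^ 2 - t^4 * Re (cnj z ^ 4 * w^2) - 1"
    unfolding rho_def by (simp add: norm_mult power_mult_distrib mult.assoc)
  also have "\<dots> = (t^2 - 1) * (1 - (1 + t^2) * cmod w ^ 2)"
    unfolding R assms(1) by (simp add: algebra_simps power4_eq_xxxx power2_eq_square)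
  finally show ?thesis .
qed

lemma two_power2_less_1:
  assumes "\<bar>x\<bar> < 1 / 2"
  shows "2 * x^2 < (1 :: real)"
proof -
  have "\<bar>x\<bar>^2 < (1 / 2)^2"
    using assms by (intro power_strict_mono) auto
  then show ?thesis
    by (simp add: power2_eq_square)
qed

lemma Omega_radius_le: "0 \<le> (eps :: real) \<Longrightarrow> 1 / (4 * (1 + eps)^3) \<le> 1 / 4"
  by (simp add: divide_simps one_le_power)

lemma frontier_OmegaI:
  assumes "0 \<le> eps" "cmod z = 1" "cmod w < 1 / (4 * (1 + eps)^3)" "rho z w = 0"
  shows "(z, w) \<in> frontier (Omega eps)"
proof -
  have w_small: "2 * cmod w ^ 2 < 1"
    using assms(3) Omega_radius_le[OF assms(1)] by (intro two_power2_less_1) simp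
  have "(of_real t * z, w) \<in> Omega eps" if "0 < t" "t < 1" for t
  proof -
    have t2: "t^2 < 1"
      using that by (simp add: abs_square_less_1)
    then have "(1 + t^2) * cmod w ^ 2 \<le> 2 * cmod w ^ 2"
      by (intro mult_right_mono) auto
    then have "(1 + t^2) * cmod w ^ 2 < 1"
      using w_small by linarith
    with t2 have "rho (of_real t * z) w < 0"
      unfolding rho_radial_scaling[OF assms(2,4)] by (simp add: mult_neg_pos)
    then show ?thesis
      using that assms unfolding Omega_def by (simp add: norm_mult)
  qed
  then have "\<forall>\<^sub>F t in at_left 1. (of_real t * z, w) \<in> closure (Omega eps)"
    using eventually_at_left_real[of 0 1] closure_subset
    by (auto elim!: eventually_mono)
  moreover have "((\<lambda>t. (of_real t * z, w)) \<longlongrightarrow> (of_real 1 * z, w)) (at_left 1)"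
    by (intro tendsto_intros)
  ultimately have "(z, w) \<in> closure (Omega eps)"
    using Lim_in_closed_set[OF closed_closure] trivial_limit_at_left_real by fastforce
  moreover have "(z, w) \<notin> interior (Omega eps)"
    using assms(4) interior_subset unfolding Omega_def by fastforce
  ultimately show ?thesis
    unfolding frontier_def by blast
qed

lemma palindromic_quadratic_on_circle:
  assumes "cmod \<zeta> = 1"
  shows "a + of_real b * \<zeta> + cnj a * \<zeta>^2 = \<zeta> * of_real (2 * Re (a * cnj \<zeta>) + b)"
proof -
  have "of_real (2 * Re (a * cnj \<zeta>)) = a * cnj \<zeta> + cnj (a * cnj \<zeta>)"
    by (rule complex_add_cnj[symmetric])
  then have "\<zeta> * of_real (2 * Re (a * cnj \<zeta>) + b) = a * (cnj \<zeta> * \<zeta>) + cnj a * \<zeta>^2 + of_real b * \<zeta>"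
    by (simp add: algebra_simps power2_eq_square)
  then show ?thesis
    using cnj_mult_self_eq_1[OF assms] by simp
qed

lemma abs_palindromic_coeff_le:
  assumes "cmod \<zeta> = 1"
  shows "\<bar>2 * Re (a * cnj \<zeta>) + b\<bar> \<le> 2 * cmod a + \<bar>b\<bar>"
proof -
  have "\<bar>Re (a * cnj \<zeta>)\<bar> \<le> cmod a"
    using abs_Re_le_cmod[of "a * cnj \<zeta>"] assms by (simp add: norm_mult)
  then show ?thesis
    by linarith
qed

lemma rotated_disc_on_circle:
  assumes "cmod \<zeta> = 1"
  shows "exp (2 * \<i> * of_real \<theta>) * \<zeta> * (a + of_real b * \<zeta> + cnj a * \<zeta>^2)
    = of_real (2 * Re (a * cnj \<zeta>) + b) * (exp (\<i> * of_real \<theta>) * \<zeta>)^2"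
proof -
  have "exp (2 * \<i> * of_real \<theta>) = exp (\<i> * of_real \<theta>)^2"
    by (simp add: exp_double[symmetric] mult.assoc)
  then show ?thesis
    unfolding palindromic_quadratic_on_circle[OF assms] by (simp add: power2_eq_square mult_ac)
qed

lemma normalized_wirt_z_rho_square_curve:
  assumes "cmod \<zeta> = 1" "cmod e = 1" "2 * q^2 \<noteq> 1"
  shows "\<zeta> * of_real (1 / (1 - 2 * q^2)) * wirt_z rho (e * \<zeta>) (of_real q * (e * \<zeta>)^2) = cnj e"
proof -
  have u_unit: "cmod (e * \<zeta>) = 1"
    using assms by (simp add: norm_mult)
  have "\<zeta> * of_real (1 / (1 - 2 * q^2)) * wirt_z rho (e * \<zeta>) (of_real q * (e * \<zeta>)^2)
      = (cnj \<zeta> * \<zeta>) * cnj e * (of_real (1 / (1 - 2 * q^2)) * of_real (1 - 2 * q^2))"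
    unfolding wirt_z_rho_square_curve[OF u_unit] complex_cnj_mult by (simp only: mult_ac)
  moreover have "of_real (1 / (1 - 2 * q^2)) * of_real (1 - 2 * q^2) = (1 :: complex)"
    using assms(3) unfolding of_real_mult[symmetric] by simp
  ultimately show ?thesis
    unfolding cnj_mult_self_eq_1[OF assms(1)] by simp
qed

theorem mainTheorem10:
  fixes eps :: real and a1 :: complex and a2 :: real and \<theta> :: real
    and f :: "complex \<Rightarrow> complex \<times> complex"
  assumes "0 < eps" "eps < 1 / 100"
    and "0 \<le> \<theta>" "\<theta> < 2 * pi"
    and "2 * cmod a1 + \<bar>a2\<bar> < 1 / (4 * (1 + eps)^3)"
    and "\<And>\<zeta>::complex. f \<zeta> = (exp (\<i> * \<theta>) * \<zeta>,
                   exp (2 * \<i> * \<theta>) * \<zeta> * (a1 + a2 * \<zeta> + cnj a1 * \<zeta>^2))"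
  shows "(\<forall>\<zeta>\<in>sphere 0 1. f \<zeta> \<in> frontier (Omega eps) \<and> rho (fst (f \<zeta>)) (snd (f \<zeta>)) = 0) \<and>
         (\<exists>c :: complex \<Rightarrow> real. continuous_on (sphere 0 1) c \<and> (\<forall>\<zeta>\<in>sphere 0 1. c \<zeta> \<noteq> 0) \<and>
            (\<exists>g1 g2 :: complex \<Rightarrow> complex.
               g1 holomorphic_on ball 0 1 \<and> g2 holomorphic_on ball 0 1 \<and>
               continuous_on (cball 0 1) g1 \<and> continuous_on (cball 0 1) g2 \<and>
               (\<forall>\<zeta>\<in>sphere 0 1.
                  g1 \<zeta> = \<zeta> * complex_of_real (c \<zeta>) * wirt_z rho (fst (f \<zeta>)) (snd (f \<zeta>)) \<and>
                  g2 \<zeta> = \<zeta> * complex_of_real (c \<zeta>) * wirt_w rho (fst (f \<zeta>)) (snd (f \<zeta>)))))"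
  proof -
  define e where "e = exp (\<i> * of_real \<theta>)"
  define q where "q \<zeta> = 2 * Re (a1 * cnj \<zeta>) + a2" for \<zeta>
  define c where "c \<zeta> = 1 / (1 - 2 * q \<zeta> ^ 2)" for \<zeta>
  have e_unit: "cmod e = 1"
    by (simp add: e_def)
  have u_unit: "cmod (e * \<zeta>) = 1" if "\<zeta> \<in> sphere 0 1" for \<zeta>
    using that e_unit by (simp add: norm_mult)
  have f_circle: "f \<zeta> = (e * \<zeta>, of_real (q \<zeta>) * (e * \<zeta>)^2)" if "\<zeta> \<in> sphere 0 1" for \<zeta>
    using that rotated_disc_on_circle unfolding assms(6) e_def q_def by simp
  have q_small: "\<bar>q \<zeta>\<bar> < 1 / (4 * (1 + eps)^3)" if "\<zeta> \<in> sphere 0 1" for \<zeta>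
    using that abs_palindromic_coeff_le[of \<zeta> a1 a2] assms(5) unfolding q_def by simp
  have c_denom: "2 * q \<zeta> ^ 2 < 1" if "\<zeta> \<in> sphere 0 1" for \<zeta>
    using q_small[OF that] Omega_radius_le[of eps] assms(1) by (intro two_power2_less_1) linarith
  have "continuous_on (sphere 0 1) c"
    using c_denom unfolding c_def q_def by (intro continuous_intros) force+
  moreover have "f \<zeta> \<in> frontier (Omega eps) \<and> rho (fst (f \<zeta>)) (snd (f \<zeta>)) = 0"
    if "\<zeta> \<in> sphere 0 1" for \<zeta>
    unfolding f_circle[OF that] fst_conv snd_conv
    using rho_square_curve_eq_0[OF u_unit[OF that]] q_small[OF that] u_unit[OF that] e_unit assms(1)
    by (auto simp: norm_mult norm_power intro!: frontier_OmegaI)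
  moreover have "\<zeta> * of_real (c \<zeta>) * wirt_z rho (fst (f \<zeta>)) (snd (f \<zeta>)) = cnj e"
    if "\<zeta> \<in> sphere 0 1" for \<zeta>
    unfolding f_circle[OF that] fst_conv snd_conv c_def
    using that c_denom[OF that] e_unit by (intro normalized_wirt_z_rho_square_curve) auto
  moreover have "wirt_w rho (fst (f \<zeta>)) (snd (f \<zeta>)) = 0" if "\<zeta> \<in> sphere 0 1" for \<zeta>
    unfolding f_circle[OF that] fst_conv snd_conv by (rule wirt_w_rho_square_curve[OF u_unit[OF that]])
  moreover have "c \<zeta> \<noteq> 0" if "\<zeta> \<in> sphere 0 1" for \<zeta>
    using c_denom[OF that] unfolding c_def by simp
  ultimately show ?thesis
    by (intro conjI exI[of _ c] exI[of _ "\<lambda>_. cnj e"] exI[of _ "\<lambda>_. 0"]) auto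
qed

end
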